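(* Let $\Phi$ be a symbol of the form $\Phi(s)=c_0s+\phi(s)$ (with $c_0$ a non-negative integer and $\phi$ a convergent Dirichlet series) such that $D_\Phi f=f'\circ\Phi$ is a bounded operator on $\mathcal{H}^2$. Then $D_\Phi$ is self-adjoint on $\mathcal{H}^2$ if, and only if, $\Phi(s)=s+c_1$ for some real constant $c_1$.
   Context: $\mathcal{H}^2$ is the Hilbert space of Dirichlet series $f(s)=\sum_{n\ge1}a_nn^{-s}$ with $\|f\|_{\mathcal{H}^2}^2=\sum_n|a_n|^2<\infty$, with inner product $\langle f,g\rangle=\sum a_n\overline{b_n}$. *)

theory Defs
  imports "HOL-Analysis.Analysis"
begin

text \<open>A Dirichlet series sum_{n>=1} a_n n^{-s} is represented by its coefficient
  sequence a :: nat => complex; the coefficient a 0 plays no role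
  (note 0 powr z = 0).\<close>

definition H2 :: "(nat \<Rightarrow> complex) set" where
  "H2 = {a. a 0 = 0 \<and> summable (\<lambda>n. (cmod (a n))\<^sup>2)}"

definition h2_norm :: "(nat \<Rightarrow> complex) \<Rightarrow> real" where
  "h2_norm a = sqrt (\<Sum>n. (cmod (a n))\<^sup>2)"

definition h2_inner :: "(nat \<Rightarrow> complex) \<Rightarrow> (nat \<Rightarrow> complex) \<Rightarrow> complex" where
  "h2_inner a b = (\<Sum>n. a n * cnj (b n))"

definition dir_series :: "(nat \<Rightarrow> complex) \<Rightarrow> complex \<Rightarrow> complex" where
  "dir_series a s = (\<Sum>n. a n * of_nat n powr (- s))"

definition convergent_dirichlet :: "(nat \<Rightarrow> complex) \<Rightarrow> bool" where
  "convergent_dirichlet b \<longleftrightarrow>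
     (\<exists>\<sigma>::real. \<forall>s. Re s > \<sigma> \<longrightarrow> summable (\<lambda>n. b n * of_nat n powr (- s)))"

definition Phi :: "nat \<Rightarrow> (nat \<Rightarrow> complex) \<Rightarrow> complex \<Rightarrow> complex" where
  "Phi c0 b s = of_nat c0 * s + dir_series b s"

text \<open>g represents f' o Phi: they agree on some right half-plane
  (on which Phi takes values in the half-plane Re > 1/2 where f is defined).\<close>
definition represents_DPhi ::
  "(complex \<Rightarrow> complex) \<Rightarrow> (nat \<Rightarrow> complex) \<Rightarrow> (nat \<Rightarrow> complex) \<Rightarrow> bool" where
  "represents_DPhi \<Phi> f g \<longleftrightarrow>
     (\<exists>\<sigma>::real. \<forall>s. Re s > \<sigma> \<longrightarrow>
        Re (\<Phi> s) > 1/2 \<and> dir_series g s = deriv (dir_series f) (\<Phi> s))"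

definition DPhi :: "(complex \<Rightarrow> complex) \<Rightarrow> (nat \<Rightarrow> complex) \<Rightarrow> (nat \<Rightarrow> complex)" where
  "DPhi \<Phi> f = (THE g. g \<in> H2 \<and> represents_DPhi \<Phi> f g)"

definition DPhi_bounded :: "(complex \<Rightarrow> complex) \<Rightarrow> bool" where
  "DPhi_bounded \<Phi> \<longleftrightarrow>
     (\<exists>C::real. \<forall>f\<in>H2. \<exists>g\<in>H2. represents_DPhi \<Phi> f g \<and> h2_norm g \<le> C * h2_norm f)"

definition DPhi_selfadjoint :: "(complex \<Rightarrow> complex) \<Rightarrow> bool" where
  "DPhi_selfadjoint \<Phi> \<longleftrightarrow>
     (\<forall>f\<in>H2. \<forall>g\<in>H2. h2_inner (DPhi \<Phi> f) g = h2_inner f (DPhi \<Phi> g))"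

end

theory Submission
  imports Defs
begin

(* Test D_Phi against the basis vectors e_m = m^-s. The Dirichlet series of D_Phi e_m is
   -ln m * m^(-Phi(s)) = -ln m * m^(-c0 s) * m^(-phi(s)); since phi(s) tends to its first
   coefficient b_1 as s -> +infinity, the first nonzero coefficient of D_Phi e_m sits at index m^c0
   and equals -ln m * m^(-b_1). Self-adjointness makes the matrix <D_Phi e_m, e_k> Hermitian,
   which is incompatible with this triangular shape unless c0 = 1, and then forces it to be a real
   diagonal. Diagonality means m^(-phi(s)) = m^(-b_1) for all m; for m = 2, 3 this yields
   phi(s) = b_1 because ln 3 / ln 2 is irrational, and a real diagonal makes b_1 real.
   Conversely, for Phi(s) = s + c1 the operator multiplies the n-th coefficient by the real
   number -ln n * n^(-c1). *)

section \<open>Incommensurability of ln 2 and ln 3\<close>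

lemma int_mult_ln3_eq_int_mult_ln2_imp_zero:
  fixes p q :: int
  assumes "of_int p * ln 3 = of_int q * ln (2::real)"
  shows "p = 0"
proof -
  define P Q where "P = nat \<bar>p\<bar>" and "Q = nat \<bar>q\<bar>"
  have PQ: "real P * ln 3 = real Q * ln 2"
    using arg_cong[OF assms, of abs] unfolding P_def Q_def by (simp add: abs_mult)
  have "Q = 0"
  proof (rule ccontr)
    assume "Q \<noteq> 0"
    have "ln ((3::real) ^ P) = ln (2 ^ Q)"
      using PQ by (simp add: ln_realpow)
    then have "(3::nat) ^ P = 2 ^ Q"
      by (metis ln_inj_iff of_nat_eq_iff of_nat_numeral of_nat_power zero_less_numeral zero_less_power)
    with \<open>Q \<noteq> 0\<close> have "even ((3::nat) ^ P)" by simp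
    then show False by simp
  qed
  with PQ have "P = 0" by simp
  then show ?thesis unfolding P_def by simp
qed

lemma exp_ln2_ln3_eq_1_imp_zero:
  fixes w :: complex
  assumes "exp (w * of_real (ln 2)) = 1" and "exp (w * of_real (ln 3)) = 1"
  shows "w = 0"
proof -
  obtain p q :: int where p: "Im w * ln 2 = of_int (2 * p) * pi"
    and q: "Im w * ln 3 = of_int (2 * q) * pi" and re: "Re w * ln 2 = 0"
    using assms unfolding exp_eq_1 by auto
  have "of_int p * ln 3 * (2 * pi) = Im w * ln 2 * ln 3" using p by simp
  also have "\<dots> = Im w * ln 3 * ln 2" by (simp only: mult_ac)
  also have "\<dots> = of_int q * ln 2 * (2 * pi)" using q by simp
  finally have "of_int p * ln 3 = of_int q * ln (2::real)" by simp
  then have "p = 0" by (rule int_mult_ln3_eq_int_mult_ln2_imp_zero)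
  with p re show ?thesis by (simp add: complex_eq_iff)
qed

section \<open>Dirichlet series with polynomially bounded coefficients\<close>

lemma of_nat_powr_of_real: "(of_nat n :: complex) powr of_real s = of_real (real n powr s)"
  using powr_of_real[of "real n" s] by simp

lemma norm_of_nat_powr: "norm ((of_nat n :: complex) powr z) = real n powr Re z"
  using norm_powr_real_powr[of "of_nat n" z] by simp

lemma powr_tendsto_0_at_top:
  fixes c :: real
  assumes "0 < c" "c < 1"
  shows "((\<lambda>s. c powr s) \<longlongrightarrow> 0) at_top"
  using assms by real_asymp

lemma dir_series_of_real: "dir_series a (of_real s) = (\<Sum>n. a n * of_real (real n powr (- s)))"
  unfolding dir_series_def by (metis of_nat_powr_of_real of_real_minus)

definition polynomially_bounded :: "(nat \<Rightarrow> complex) \<Rightarrow> bool" where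
  "polynomially_bounded a \<longleftrightarrow> (\<exists>B \<alpha>. \<forall>n\<ge>1. norm (a n) \<le> B * real n powr \<alpha>)"

lemma poly_bound_nonneg:
  assumes "\<forall>n\<ge>1. norm (a n) \<le> B * real n powr \<alpha>"
  shows "0 \<le> B"
  using assms norm_ge_zero[of "a 1"] by (metis order_trans mult.right_neutral
      nat_le_linear of_nat_1 powr_one_eq_one)

lemma summable_dir_series_of_real:
  fixes a :: "nat \<Rightarrow> complex"
  assumes bound: "\<forall>n\<ge>1. norm (a n) \<le> B * real n powr \<alpha>" and s: "s > \<alpha> + 1"
  shows "summable (\<lambda>n. a n * of_real (real n powr (- s)))"
proof (rule summable_comparison_test)
  show "summable (\<lambda>n. B * real n powr (\<alpha> - s))"
    using s by (intro summable_mult) (simp add: summable_real_powr_iff)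
  show "\<exists>N. \<forall>n\<ge>N. norm (a n * of_real (real n powr (- s))) \<le> B * real n powr (\<alpha> - s)"
  proof (intro exI[of _ 1] allI impI)
    fix n :: nat
    assume "n \<ge> 1"
    have "norm (a n * of_real (real n powr (- s))) = norm (a n) * real n powr (- s)"
      by (simp add: norm_mult)
    also have "\<dots> \<le> B * real n powr \<alpha> * real n powr (- s)"
      using bound \<open>n \<ge> 1\<close> by (intro mult_right_mono) auto
    also have "\<dots> = B * real n powr (\<alpha> - s)"
      by (simp add: powr_add[symmetric])
    finally show "norm (a n * of_real (real n powr (- s))) \<le> B * real n powr (\<alpha> - s)" .
  qed
qed

lemma powr_mult_dir_series_of_real:
  fixes a :: "nat \<Rightarrow> complex"
  assumes bound: "\<forall>n\<ge>1. norm (a n) \<le> B * real n powr \<alpha>" and s: "s > \<alpha> + 1"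
  shows "of_real (real K powr s) * dir_series a (of_real s)
    = (\<Sum>k. a k * of_real ((real K / real k) powr s))"
proof -
  have "of_real (real K powr s) * dir_series a (of_real s)
      = (\<Sum>k. of_real (real K powr s) * (a k * of_real (real k powr (- s))))"
    unfolding dir_series_of_real using summable_dir_series_of_real[OF bound s]
    by (simp add: suminf_mult)
  also have "\<dots> = (\<Sum>k. a k * of_real ((real K / real k) powr s))"
  proof (rule suminf_cong)
    fix k
    show "of_real (real K powr s) * (a k * of_real (real k powr (- s)))
        = a k * of_real ((real K / real k) powr s)"
      by (cases "k = 0") (simp_all add: powr_divide powr_minus field_simps)
  qed
  finally show ?thesis .
qed

lemma norm_coeff_mult_powr_ratio_le:
  fixes a :: "nat \<Rightarrow> complex"
  assumes bound: "\<forall>n\<ge>1. norm (a n) \<le> B * real n powr \<alpha>" and k: "K < k" and s: "s \<ge> \<alpha> + 2"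
  shows "norm (a k * of_real ((real K / real k) powr s)) \<le> B * real K powr (\<alpha> + 2) * real k powr (- 2)"
proof -
  have ratio: "0 \<le> real K / real k" "real K / real k \<le> 1" using k by auto
  have "norm (a k * of_real ((real K / real k) powr s)) = norm (a k) * (real K / real k) powr s"
    by (simp add: norm_mult)
  also have "\<dots> \<le> B * real k powr \<alpha> * (real K / real k) powr (\<alpha> + 2)"
    using bound k ratio s poly_bound_nonneg[OF bound] by (intro mult_mono powr_mono') auto
  also have "\<dots> = B * real K powr (\<alpha> + 2) * real k powr (- 2)"
    using k by (simp add: powr_divide powr_minus powr_diff powr_add field_simps)
  finally show ?thesis .
qed

lemma tendsto_powr_mult_dir_series:
  assumes "polynomially_bounded a" and K: "K \<ge> 1"
    and below: "\<And>n. 1 \<le> n \<Longrightarrow> n < K \<Longrightarrow> a n = 0"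
  shows "((\<lambda>s. of_real (real K powr s) * dir_series a (of_real s)) \<longlongrightarrow> a K) at_top"
proof -
  obtain B \<alpha> where bound: "\<forall>n\<ge>1. norm (a n) \<le> B * real n powr \<alpha>"
    using assms(1) unfolding polynomially_bounded_def by blast
  define F where "F k s = a k * of_real ((real K / real k) powr s)" for k s
  have termwise: "((\<lambda>s. F k s) \<longlongrightarrow> (if k = K then a K else 0)) at_top" for k
  proof (cases "k > K")
    case True
    have "((\<lambda>s. (real K / real k) powr s) \<longlongrightarrow> 0) at_top"
      using K True by (intro powr_tendsto_0_at_top) auto
    then have "((\<lambda>s. a k * of_real ((real K / real k) powr s)) \<longlongrightarrow> a k * of_real 0) at_top"
      by (intro tendsto_intros)
    with True show ?thesis by (simp add: F_def)
  next
    case False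
    then consider "k = K" | "k = 0" | "1 \<le> k \<and> k < K" by linarith
    then show ?thesis
      by cases (use K below in \<open>simp_all add: F_def\<close>)
  qed
  have dominated: "\<forall>\<^sub>F (k, s) in at_top \<times>\<^sub>F at_top.
      norm (F k s) \<le> B * real K powr (\<alpha> + 2) * real k powr (- 2)"
    unfolding eventually_prod_filter F_def
    using norm_coeff_mult_powr_ratio_le[OF bound]
    by (intro exI[of _ "\<lambda>k. k > K"] exI[of _ "\<lambda>s. s \<ge> \<alpha> + 2"]) auto
  have "summable (\<lambda>k. B * real K powr (\<alpha> + 2) * real k powr (- 2))"
    by (intro summable_mult) (simp add: summable_real_powr_iff)
  from tannerys_theorem[OF termwise dominated this]
  have "((\<lambda>s. \<Sum>k. F k s) \<longlongrightarrow> a K) at_top"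
    using sums_unique[OF sums_single[of K "\<lambda>_. a K"]] by simp
  moreover have "\<forall>\<^sub>F s in at_top. (\<Sum>k. F k s) = of_real (real K powr s) * dir_series a (of_real s)"
    using eventually_gt_at_top[of "\<alpha> + 1"]
    by eventually_elim (simp add: F_def powr_mult_dir_series_of_real[OF bound])
  ultimately show ?thesis by (rule Lim_transform_eventually)
qed

text \<open>If \<open>n < K\<close> is the first nonzero index, then
  \<open>n\<^sup>s D(a)(s) = (n/K)\<^sup>s K\<^sup>s D(a)(s)\<close> tends both to \<open>a n\<close> and to \<open>0\<close>.\<close>
lemma dir_series_coeffs_below_zero:
  assumes a: "polynomially_bounded a"
    and lim: "((\<lambda>s. of_real (real K powr s) * dir_series a (of_real s)) \<longlongrightarrow> L) at_top"
    and n: "1 \<le> n" "n < K"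
  shows "a n = 0"
  using n
proof (induction n rule: less_induct)
  case (less n)
  have lim_n: "((\<lambda>s. of_real (real n powr s) * dir_series a (of_real s)) \<longlongrightarrow> a n) at_top"
    using less by (intro tendsto_powr_mult_dir_series[OF a]) auto
  have "((\<lambda>s. of_real ((real n / real K) powr s) *
      (of_real (real K powr s) * dir_series a (of_real s))) \<longlongrightarrow> of_real 0 * L) at_top"
    using less.prems by (intro tendsto_intros lim powr_tendsto_0_at_top) auto
  moreover have "(\<lambda>s. of_real ((real n / real K) powr s) *
      (of_real (real K powr s) * dir_series a (of_real s)))
      = (\<lambda>s. of_real (real n powr s) * dir_series a (of_real s))"
    using less.prems by (auto simp: powr_divide)
  ultimately have "((\<lambda>s. of_real (real n powr s) * dir_series a (of_real s)) \<longlongrightarrow> 0) at_top"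
    by simp
  with lim_n show ?case by (rule tendsto_unique[rotated]) simp
qed

lemma dir_series_coeff_eq_limit:
  assumes "polynomially_bounded a" "K \<ge> 1"
    and "((\<lambda>s. of_real (real K powr s) * dir_series a (of_real s)) \<longlongrightarrow> L) at_top"
  shows "a K = L"
  using tendsto_unique[OF _ tendsto_powr_mult_dir_series assms(3)]
    dir_series_coeffs_below_zero assms by auto

lemma polynomially_bounded_diff:
  assumes "polynomially_bounded a" "polynomially_bounded b"
  shows "polynomially_bounded (\<lambda>n. a n - b n)"
proof -
  obtain B1 \<alpha>1 where 1: "\<forall>n\<ge>1. norm (a n) \<le> B1 * real n powr \<alpha>1"
    using assms(1) unfolding polynomially_bounded_def by blast
  obtain B2 \<alpha>2 where 2: "\<forall>n\<ge>1. norm (b n) \<le> B2 * real n powr \<alpha>2"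
    using assms(2) unfolding polynomially_bounded_def by blast
  have "norm (a n - b n) \<le> (B1 + B2) * real n powr max \<alpha>1 \<alpha>2" if n: "n \<ge> 1" for n
  proof -
    have "norm (a n - b n) \<le> B1 * real n powr \<alpha>1 + B2 * real n powr \<alpha>2"
      using 1 2 n norm_triangle_ineq4[of "a n" "b n"] by force
    also have "\<dots> \<le> B1 * real n powr max \<alpha>1 \<alpha>2 + B2 * real n powr max \<alpha>1 \<alpha>2"
      using n poly_bound_nonneg[OF 1] poly_bound_nonneg[OF 2]
      by (intro add_mono mult_left_mono powr_mono) auto
    finally show ?thesis by (simp add: algebra_simps)
  qed
  then show ?thesis unfolding polynomially_bounded_def by blast
qed

lemma dir_series_coeffs_unique:
  assumes a: "polynomially_bounded a" and b: "polynomially_bounded b" and "a 0 = b 0"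
    and eq: "\<forall>\<^sub>F s in at_top. dir_series a (of_real s) = dir_series b (of_real s)"
  shows "a = b"
proof
  fix K :: nat
  obtain B1 \<alpha>1 where 1: "\<forall>n\<ge>1. norm (a n) \<le> B1 * real n powr \<alpha>1"
    using a unfolding polynomially_bounded_def by blast
  obtain B2 \<alpha>2 where 2: "\<forall>n\<ge>1. norm (b n) \<le> B2 * real n powr \<alpha>2"
    using b unfolding polynomially_bounded_def by blast
  have "\<forall>\<^sub>F s in at_top. of_real (real K powr s) * dir_series (\<lambda>n. a n - b n) (of_real s) = 0"
    using eq eventually_gt_at_top[of "max \<alpha>1 \<alpha>2 + 1"]
  proof eventually_elim
    case (elim s)
    then have "dir_series (\<lambda>n. a n - b n) (of_real s) = dir_series a (of_real s) - dir_series b (of_real s)"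
      unfolding dir_series_of_real
      using suminf_diff[OF summable_dir_series_of_real[OF 1, of s] summable_dir_series_of_real[OF 2, of s]]
      by (simp add: algebra_simps)
    with elim show ?case by simp
  qed
  then have lim: "((\<lambda>s. of_real (real K powr s) * dir_series (\<lambda>n. a n - b n) (of_real s))
      \<longlongrightarrow> 0) at_top"
    by (rule tendsto_eventually)
  show "a K = b K"
  proof (cases "K = 0")
    case False
    then have "a K - b K = 0"
      using dir_series_coeff_eq_limit[OF polynomially_bounded_diff[OF a b] _ lim] by simp
    then show ?thesis by simp
  qed (use \<open>a 0 = b 0\<close> in simp)
qed

lemma convergent_dirichlet_polynomially_bounded:
  assumes "convergent_dirichlet b"
  shows "polynomially_bounded b"
proof -
  obtain \<sigma> where conv: "\<forall>s. Re s > \<sigma> \<longrightarrow> summable (\<lambda>n. b n * of_nat n powr (- s))"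
    using assms unfolding convergent_dirichlet_def by blast
  have "summable (\<lambda>n. b n * of_real (real n powr (- (\<sigma> + 1))))"
    using conv[rule_format, of "of_real (\<sigma> + 1)"] of_nat_powr_of_real[of _ "- (\<sigma> + 1)"] by simp
  then have "(\<lambda>n. b n * of_real (real n powr (- (\<sigma> + 1)))) \<longlonglongrightarrow> 0"
    by (rule summable_LIMSEQ_zero)
  then have "Bseq (\<lambda>n. b n * of_real (real n powr (- (\<sigma> + 1))))"
    by (intro convergent_imp_Bseq convergentI)
  then obtain C where C: "\<And>n. norm (b n * of_real (real n powr (- (\<sigma> + 1)))) \<le> C"
    unfolding Bseq_def by blast
  have "norm (b n) \<le> C * real n powr (\<sigma> + 1)" if n: "n \<ge> 1" for n
  proof -
    have "norm (b n) = norm (b n * of_real (real n powr (- (\<sigma> + 1)))) * real n powr (\<sigma> + 1)"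
      using n by (simp add: norm_mult mult.assoc powr_add[symmetric])
    also have "\<dots> \<le> C * real n powr (\<sigma> + 1)"
      using C by (intro mult_right_mono) auto
    finally show ?thesis .
  qed
  then show ?thesis unfolding polynomially_bounded_def by blast
qed

section \<open>The operator D_Phi on H2\<close>

lemma norm_le_h2_norm:
  assumes "a \<in> H2"
  shows "norm (a n) \<le> h2_norm a"
proof -
  have "summable (\<lambda>n. (cmod (a n))\<^sup>2)" using assms by (simp add: H2_def)
  then have "(cmod (a n))\<^sup>2 \<le> (\<Sum>n. (cmod (a n))\<^sup>2)"
    using sum_le_suminf[of _ "{n}"] by fastforce
  then show ?thesis unfolding h2_norm_def by (simp add: real_le_rsqrt)
qed

lemma H2_polynomially_bounded: "a \<in> H2 \<Longrightarrow> polynomially_bounded a"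
  unfolding polynomially_bounded_def using norm_le_h2_norm
  by (intro exI[of _ "h2_norm a"] exI[of _ 0]) auto

lemma H2_eqI:
  assumes "a \<in> H2" "b \<in> H2"
    and "\<forall>\<^sub>F s in at_top. dir_series a (of_real s) = dir_series b (of_real s)"
  shows "a = b"
  using assms by (intro dir_series_coeffs_unique H2_polynomially_bounded) (auto simp: H2_def)

lemma represents_DPhi_eventually:
  assumes "represents_DPhi \<Phi> f g"
  shows "\<forall>\<^sub>F s in at_top. dir_series g (of_real s) = deriv (dir_series f) (\<Phi> (of_real s))"
proof -
  obtain \<sigma> where "\<forall>s. Re s > \<sigma> \<longrightarrow> dir_series g s = deriv (dir_series f) (\<Phi> s)"
    using assms unfolding represents_DPhi_def by blast
  then show ?thesis
    by (auto intro: eventually_mono[OF eventually_gt_at_top[of \<sigma>]])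
qed

lemma represents_DPhi_unique:
  assumes "g1 \<in> H2" "g2 \<in> H2" "represents_DPhi \<Phi> f g1" "represents_DPhi \<Phi> f g2"
  shows "g1 = g2"
  using assms(1,2) represents_DPhi_eventually[OF assms(3)] represents_DPhi_eventually[OF assms(4)]
  by (intro H2_eqI) (auto elim: eventually_elim2)

lemma DPhi:
  assumes "DPhi_bounded \<Phi>" "f \<in> H2"
  shows DPhi_in_H2: "DPhi \<Phi> f \<in> H2"
    and represents_DPhi_DPhi: "represents_DPhi \<Phi> f (DPhi \<Phi> f)"
proof -
  obtain g where "g \<in> H2" "represents_DPhi \<Phi> f g"
    using assms unfolding DPhi_bounded_def by blast
  then have "\<exists>!g. g \<in> H2 \<and> represents_DPhi \<Phi> f g"
    using represents_DPhi_unique by blast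
  then have "DPhi \<Phi> f \<in> H2 \<and> represents_DPhi \<Phi> f (DPhi \<Phi> f)"
    unfolding DPhi_def by (rule theI')
  then show "DPhi \<Phi> f \<in> H2" "represents_DPhi \<Phi> f (DPhi \<Phi> f)" by auto
qed

definition h2_basis :: "nat \<Rightarrow> nat \<Rightarrow> complex" where
  "h2_basis m = (\<lambda>n. if n = m then 1 else 0)"

lemma h2_basis_in_H2:
  assumes "m \<ge> 1"
  shows "h2_basis m \<in> H2"
proof -
  have "summable (\<lambda>n. (cmod (h2_basis m n))\<^sup>2)"
    by (rule summable_finite[of "{m}"]) (auto simp: h2_basis_def)
  with assms show ?thesis by (simp add: H2_def h2_basis_def)
qed

lemma suminf_if_eq: "(\<Sum>n. if n = m then x else 0) = (x :: complex)"
  using sums_unique[OF sums_single[of m "\<lambda>_. x"]] by simp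

lemma h2_inner_basis_right: "h2_inner a (h2_basis k) = a k"
proof -
  have "(\<lambda>n. a n * cnj (h2_basis k n)) = (\<lambda>n. if n = k then a k else 0)"
    by (auto simp: h2_basis_def)
  then show ?thesis unfolding h2_inner_def by (simp add: suminf_if_eq)
qed

lemma h2_inner_basis_left: "h2_inner (h2_basis m) a = cnj (a m)"
proof -
  have "(\<lambda>n. h2_basis m n * cnj (a n)) = (\<lambda>n. if n = m then cnj (a m) else 0)"
    by (auto simp: h2_basis_def)
  then show ?thesis unfolding h2_inner_def by (simp add: suminf_if_eq)
qed

lemma dir_series_single: "dir_series (\<lambda>n. if n = m then c else 0) z = c * of_nat m powr (- z)"
proof -
  have "(\<lambda>n. (if n = m then c else 0) * of_nat n powr (- z))
      = (\<lambda>n. if n = m then c * of_nat m powr (- z) else 0)"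
    by auto
  then show ?thesis unfolding dir_series_def by (simp add: suminf_if_eq)
qed

lemma deriv_dir_series_basis:
  assumes "m \<ge> 1"
  shows "deriv (dir_series (h2_basis m)) w
    = - of_real (ln (real m)) * exp (- w * of_real (ln (real m)))"
proof -
  have "dir_series (h2_basis m) = (\<lambda>z. exp (- z * of_real (ln (real m))))"
    using assms unfolding h2_basis_def by (auto simp: dir_series_single powr_def)
  moreover have "((\<lambda>z. exp (- z * of_real (ln (real m)))) has_field_derivative
      exp (- w * of_real (ln (real m))) * (- of_real (ln (real m)))) (at w)"
    by (auto intro!: derivative_eq_intros)
  ultimately show ?thesis by (simp add: DERIV_imp_deriv mult.commute)
qed

lemma norm_log_dir_series_term_le:
  fixes a :: "nat \<Rightarrow> complex"
  assumes bound: "\<And>n. norm (a n) \<le> B" and x: "Re x \<ge> t"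
  shows "norm (- a n * of_real (ln (real n)) * of_nat n powr (- x)) \<le> B * real n powr (1 - t)"
proof (cases "n = 0")
  case False
  have "0 \<le> B" using bound[of 0] norm_ge_zero order_trans by blast
  have "norm (- a n * of_real (ln (real n)) * of_nat n powr (- x))
      = norm (a n) * ln (real n) * real n powr (- Re x)"
    using False by (simp add: norm_mult norm_of_nat_powr)
  also have "\<dots> \<le> B * real n * real n powr (- t)"
    using bound False x \<open>0 \<le> B\<close>
    by (intro mult_mono powr_mono) (auto intro: order_trans[OF ln_le_minus_one])
  also have "\<dots> = B * real n powr (1 - t)"
    using False by (simp add: powr_diff powr_minus field_simps)
  finally show ?thesis .
qed simp

lemma deriv_dir_series:
  fixes a :: "nat \<Rightarrow> complex"
  assumes bound: "\<And>n. norm (a n) \<le> B" and z: "Re z > 2"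
  shows "deriv (dir_series a) z = (\<Sum>n. - a n * of_real (ln (real n)) * of_nat n powr (- z))"
proof -
  define t where "t = (2 + Re z) / 2"
  define S where "S = {x. Re x > t}"
  have t: "t > 2" "Re z > t" using z unfolding t_def by auto
  have S: "convex S" "of_real (t + 1) \<in> S"
    unfolding S_def by (auto intro: convex_halfspace_Re_gt)
  have termwise: "((\<lambda>x. a n * of_nat n powr (- x)) has_field_derivative
      - a n * of_real (ln (real n)) * of_nat n powr (- x)) (at x within S)" for n x
  proof (cases "n = 0")
    case False
    have "((\<lambda>x. a n * exp (- x * of_real (ln (real n)))) has_field_derivative
        a n * (exp (- x * of_real (ln (real n))) * (- of_real (ln (real n))))) (at x within S)"
      by (auto intro!: derivative_eq_intros)
    with False show ?thesis by (simp add: powr_def mult_ac)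
  qed simp
  have "uniformly_convergent_on S
      (\<lambda>N x. \<Sum>n<N. - a n * of_real (ln (real n)) * of_nat n powr (- x))"
    using bound norm_log_dir_series_term_le[where a = a and B = B and t = t] t unfolding S_def
    by (intro Weierstrass_m_test'[where M = "\<lambda>n. B * real n powr (1 - t)"] summable_mult)
      (auto simp: summable_real_powr_iff)
  moreover have "summable (\<lambda>n. a n * of_nat n powr (- of_real (t + 1)))"
    using summable_dir_series_of_real[of a B 0 "t + 1"] bound t
    by (simp add: of_nat_powr_of_real[symmetric])
  moreover have "z \<in> interior S"
    using t unfolding S_def by (simp add: interior_open open_halfspace_Re_gt)
  ultimately have "((\<lambda>x. \<Sum>n. a n * of_nat n powr (- x)) has_field_derivative
      (\<Sum>n. - a n * of_real (ln (real n)) * of_nat n powr (- z))) (at z)"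
    by (intro has_field_derivative_series'(2)[OF S(1) termwise _ S(2)])
  then show ?thesis
    unfolding dir_series_def[abs_def] by (rule DERIV_imp_deriv)
qed

section \<open>Symbols with a self-adjoint D_Phi\<close>

lemma dir_series_DPhi_basis:
  assumes "DPhi_bounded \<Phi>" "m \<ge> 1"
  obtains \<sigma> where "\<And>s. Re s > \<sigma> \<Longrightarrow> dir_series (DPhi \<Phi> (h2_basis m)) s
    = - of_real (ln (real m)) * exp (- \<Phi> s * of_real (ln (real m)))"
proof -
  obtain \<sigma> where "\<forall>s. Re s > \<sigma> \<longrightarrow> Re (\<Phi> s) > 1/2 \<and>
      dir_series (DPhi \<Phi> (h2_basis m)) s = deriv (dir_series (h2_basis m)) (\<Phi> s)"
    using represents_DPhi_DPhi[OF assms(1) h2_basis_in_H2[OF assms(2)]]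
    unfolding represents_DPhi_def by blast
  with that show ?thesis using deriv_dir_series_basis[OF assms(2)] by auto
qed

lemma tendsto_DPhi_basis:
  assumes b: "convergent_dirichlet b" and bdd: "DPhi_bounded (Phi c0 b)" and m: "m \<ge> 1"
  shows "((\<lambda>s. of_real (real (m ^ c0) powr s) * dir_series (DPhi (Phi c0 b) (h2_basis m)) (of_real s))
    \<longlongrightarrow> - of_real (ln (real m)) * exp (- b 1 * of_real (ln (real m)))) at_top"
proof -
  define L where "L = complex_of_real (ln (real m))"
  obtain \<sigma> where H: "\<And>s. Re s > \<sigma> \<Longrightarrow> dir_series (DPhi (Phi c0 b) (h2_basis m)) s
      = - L * exp (- Phi c0 b s * L)"
    using dir_series_DPhi_basis[OF bdd m] unfolding L_def by blast
  have "((\<lambda>s. dir_series b (of_real s)) \<longlongrightarrow> b 1) at_top"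
    using tendsto_powr_mult_dir_series[OF convergent_dirichlet_polynomially_bounded[OF b], of 1]
    by simp
  then have "((\<lambda>s. - L * exp (- dir_series b (of_real s) * L)) \<longlongrightarrow> - L * exp (- b 1 * L)) at_top"
    by (intro tendsto_intros)
  moreover have "\<forall>\<^sub>F s in at_top. - L * exp (- dir_series b (of_real s) * L)
      = of_real (real (m ^ c0) powr s) * dir_series (DPhi (Phi c0 b) (h2_basis m)) (of_real s)"
    using eventually_gt_at_top[of \<sigma>]
  proof eventually_elim
    case (elim s)
    have "real (m ^ c0) powr s = exp (s * (real c0 * ln (real m)))"
      using m by (simp add: powr_def ln_realpow)
    then have "of_real (real (m ^ c0) powr s) = exp (of_real s * of_nat c0 * L)"
      unfolding L_def by (simp add: mult_ac flip: exp_of_real)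
    then have "of_real (real (m ^ c0) powr s) * dir_series (DPhi (Phi c0 b) (h2_basis m)) (of_real s)
        = - L * (exp (of_real s * of_nat c0 * L) * exp (- (of_nat c0 * of_real s + dir_series b (of_real s)) * L))"
      using H[of "of_real s"] elim unfolding Phi_def by simp
    also have "\<dots> = - L * exp (- dir_series b (of_real s) * L)"
      by (simp only: exp_add[symmetric]) (simp add: algebra_simps)
    finally show ?case by simp
  qed
  ultimately show ?thesis unfolding L_def by (rule Lim_transform_eventually)
qed

lemma DPhi_basis_vanishes_below:
  assumes "convergent_dirichlet b" "DPhi_bounded (Phi c0 b)" "m \<ge> 1" "1 \<le> n" "n < m ^ c0"
  shows "DPhi (Phi c0 b) (h2_basis m) n = 0"
  using assms dir_series_coeffs_below_zero[OF H2_polynomially_bounded tendsto_DPhi_basis]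
    DPhi_in_H2 h2_basis_in_H2 by blast

lemma DPhi_basis_leading_coeff:
  assumes "convergent_dirichlet b" "DPhi_bounded (Phi c0 b)" "m \<ge> 1"
  shows "DPhi (Phi c0 b) (h2_basis m) (m ^ c0)
    = - of_real (ln (real m)) * exp (- b 1 * of_real (ln (real m)))"
  using assms dir_series_coeff_eq_limit[OF H2_polynomially_bounded _ tendsto_DPhi_basis]
    DPhi_in_H2 h2_basis_in_H2 by simp

lemma DPhi_basis_one:
  assumes "DPhi_bounded \<Phi>"
  shows "DPhi \<Phi> (h2_basis 1) = (\<lambda>_. 0)"
proof (rule H2_eqI)
  have e1: "h2_basis 1 \<in> H2" by (simp add: h2_basis_in_H2)
  show "DPhi \<Phi> (h2_basis 1) \<in> H2" "(\<lambda>_. 0) \<in> H2"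
    using DPhi_in_H2[OF assms e1] by (auto simp: H2_def)
  show "\<forall>\<^sub>F s in at_top. dir_series (DPhi \<Phi> (h2_basis 1)) (of_real s) = dir_series (\<lambda>_. 0) (of_real s)"
    using represents_DPhi_eventually[OF represents_DPhi_DPhi[OF assms e1]]
    by eventually_elim (simp add: deriv_dir_series_basis dir_series_def)
qed

lemma DPhi_selfadjoint_basis:
  assumes "DPhi_selfadjoint \<Phi>" "m \<ge> 1" "k \<ge> 1"
  shows "DPhi \<Phi> (h2_basis m) k = cnj (DPhi \<Phi> (h2_basis k) m)"
proof -
  have "h2_inner (DPhi \<Phi> (h2_basis m)) (h2_basis k) = h2_inner (h2_basis m) (DPhi \<Phi> (h2_basis k))"
    using assms h2_basis_in_H2 unfolding DPhi_selfadjoint_def by blast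
  then show ?thesis unfolding h2_inner_basis_left h2_inner_basis_right .
qed

lemma DPhi_selfadjoint_imp_coeff_one:
  assumes b: "convergent_dirichlet b" and bdd: "DPhi_bounded (Phi c0 b)"
    and sa: "DPhi_selfadjoint (Phi c0 b)"
  shows "c0 = 1"
proof (rule ccontr)
  define g where "g m = DPhi (Phi c0 b) (h2_basis m)" for m
  have lead: "g 2 (2 ^ c0) \<noteq> 0"
    using DPhi_basis_leading_coeff[OF b bdd, of 2] by (simp add: g_def)
  assume "c0 \<noteq> 1"
  then consider "c0 = 0" | "c0 \<ge> 2" by linarith
  then show False
  proof cases
    case 1
    then have "g 2 1 = cnj (g 1 2)"
      using DPhi_selfadjoint_basis[OF sa, of 2 1] by (simp add: g_def)
    with 1 lead show False using DPhi_basis_one[OF bdd] by (simp add: g_def)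
  next
    case 2
    then have "(2::nat) < 2 ^ c0" "(2::nat) ^ c0 \<le> (2 ^ c0) ^ c0"
      using power_strict_increasing[of 1 c0 2] self_le_power[of "2 ^ c0" c0] by auto
    then have "g (2 ^ c0) 2 = 0"
      using DPhi_basis_vanishes_below[OF b bdd, of "2 ^ c0" 2] by (simp add: g_def)
    moreover have "g 2 (2 ^ c0) = cnj (g (2 ^ c0) 2)"
      using DPhi_selfadjoint_basis[OF sa, of 2 "2 ^ c0"] by (simp add: g_def)
    ultimately show False using lead by simp
  qed
qed

lemma DPhi_basis_diagonal:
  assumes b: "convergent_dirichlet b" and bdd: "DPhi_bounded (Phi 1 b)"
    and sa: "DPhi_selfadjoint (Phi 1 b)" and m: "m \<ge> 1"
  shows "DPhi (Phi 1 b) (h2_basis m)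
    = (\<lambda>n. if n = m then - of_real (ln (real m)) * exp (- b 1 * of_real (ln (real m))) else 0)"
proof
  fix n
  consider "n = 0" | "n = m" | "1 \<le> n \<and> n < m" | "n > m" by linarith
  then show "DPhi (Phi 1 b) (h2_basis m) n
    = (if n = m then - of_real (ln (real m)) * exp (- b 1 * of_real (ln (real m))) else 0)"
  proof cases
    case 1
    then show ?thesis using DPhi_in_H2[OF bdd h2_basis_in_H2[OF m]] m by (simp add: H2_def)
  next
    case 2
    then show ?thesis using DPhi_basis_leading_coeff[OF b bdd m] by simp
  next
    case 3
    then show ?thesis using DPhi_basis_vanishes_below[OF b bdd m, of n] by simp
  next
    case 4
    then have "DPhi (Phi 1 b) (h2_basis n) m = 0"
      using DPhi_basis_vanishes_below[OF b bdd, of n m] m by simp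
    with 4 m show ?thesis using DPhi_selfadjoint_basis[OF sa m, of n] by simp
  qed
qed

lemma DPhi_selfadjoint_exp_shift_eq_1:
  assumes b: "convergent_dirichlet b" and bdd: "DPhi_bounded (Phi 1 b)"
    and sa: "DPhi_selfadjoint (Phi 1 b)" and m: "m \<ge> 2"
  obtains \<sigma> where "\<And>s. Re s > \<sigma> \<Longrightarrow> exp ((dir_series b s - b 1) * of_real (ln (real m))) = 1"
proof -
  define L where "L = complex_of_real (ln (real m))"
  obtain \<sigma> where H: "\<And>s. Re s > \<sigma> \<Longrightarrow>
      dir_series (DPhi (Phi 1 b) (h2_basis m)) s = - L * exp (- Phi 1 b s * L)"
    using dir_series_DPhi_basis[OF bdd, of m] m unfolding L_def by auto
  have "exp ((dir_series b s - b 1) * L) = 1" if s: "Re s > \<sigma>" for s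
  proof -
    have "- L * (exp (- b 1 * L) * exp (- s * L)) = - L * exp (- Phi 1 b s * L)"
      using H[OF s] DPhi_basis_diagonal[OF b bdd sa, of m] m
      by (simp add: dir_series_single powr_def L_def mult_ac)
    then have "exp (- Phi 1 b s * L) = exp (- b 1 * L) * exp (- s * L)"
      using m by (simp add: L_def)
    moreover have "exp ((dir_series b s - b 1) * L)
        = exp (- b 1 * L) * exp (- s * L) / exp (- Phi 1 b s * L)"
      by (simp only: exp_add[symmetric] exp_diff[symmetric]) (simp add: Phi_def algebra_simps)
    ultimately show ?thesis by simp
  qed
  with that show ?thesis unfolding L_def by blast
qed

lemma DPhi_selfadjoint_exp_cnj_shift_eq_1:
  assumes b: "convergent_dirichlet b" and bdd: "DPhi_bounded (Phi 1 b)"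
    and sa: "DPhi_selfadjoint (Phi 1 b)" and m: "m \<ge> 2"
  shows "exp ((cnj (b 1) - b 1) * of_real (ln (real m))) = 1"
proof -
  define L where "L = complex_of_real (ln (real m))"
  have "DPhi (Phi 1 b) (h2_basis m) m = cnj (DPhi (Phi 1 b) (h2_basis m) m)"
    using DPhi_selfadjoint_basis[OF sa, of m m] m by simp
  then have "- L * exp (- b 1 * L) = - L * exp (- cnj (b 1) * L)"
    using DPhi_basis_leading_coeff[OF b bdd, of m] m unfolding L_def by (simp add: exp_cnj)
  then have "exp (- b 1 * L) = exp (- cnj (b 1) * L)"
    using m by (simp add: L_def)
  moreover have "exp ((cnj (b 1) - b 1) * L) = exp (- b 1 * L) / exp (- cnj (b 1) * L)"
    by (simp only: exp_diff[symmetric]) (simp add: algebra_simps)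
  ultimately show ?thesis unfolding L_def by simp
qed

lemma DPhi_selfadjoint_imp_translation:
  assumes "convergent_dirichlet b" "DPhi_bounded (Phi 1 b)" "DPhi_selfadjoint (Phi 1 b)"
  shows "\<exists>c1::real. \<exists>\<sigma>::real. \<forall>s. Re s > \<sigma> \<longrightarrow> Phi 1 b s = s + of_real c1"
proof -
  have "cnj (b 1) - b 1 = 0"
    using DPhi_selfadjoint_exp_cnj_shift_eq_1[OF assms, of 2] DPhi_selfadjoint_exp_cnj_shift_eq_1[OF assms, of 3]
    by (intro exp_ln2_ln3_eq_1_imp_zero) simp_all
  then have b1: "b 1 = of_real (Re (b 1))"
    by (simp add: complex_eq_iff)
  obtain \<sigma>2 where
    \<sigma>2: "\<And>s. Re s > \<sigma>2 \<Longrightarrow> exp ((dir_series b s - b 1) * of_real (ln (real 2))) = 1"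
    using DPhi_selfadjoint_exp_shift_eq_1[OF assms, of 2] by auto
  obtain \<sigma>3 where
    \<sigma>3: "\<And>s. Re s > \<sigma>3 \<Longrightarrow> exp ((dir_series b s - b 1) * of_real (ln (real 3))) = 1"
    using DPhi_selfadjoint_exp_shift_eq_1[OF assms, of 3] by auto
  then have "Phi 1 b s = s + of_real (Re (b 1))" if "Re s > max \<sigma>2 \<sigma>3" for s
    using that \<sigma>2[of s] \<sigma>3[of s] exp_ln2_ln3_eq_1_imp_zero[of "dir_series b s - b 1"] b1
    unfolding Phi_def by auto
  then show ?thesis by blast
qed

lemma DPhi_translation:
  assumes bdd: "DPhi_bounded \<Phi>" and \<Phi>: "\<forall>s. Re s > \<sigma> \<longrightarrow> \<Phi> s = s + of_real c1"
    and f: "f \<in> H2"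
  shows "DPhi \<Phi> f = (\<lambda>n. f n * of_real (- ln (real n) * real n powr (- c1)))"
proof (rule dir_series_coeffs_unique)
  show "polynomially_bounded (DPhi \<Phi> f)"
    using DPhi_in_H2[OF bdd f] by (rule H2_polynomially_bounded)
  have "norm (f n * of_real (- ln (real n) * real n powr (- c1))) \<le> h2_norm f * real n powr (1 - c1)"
    for n
    using norm_le_h2_norm[OF f]
      norm_log_dir_series_term_le[where a = f and B = "h2_norm f" and t = c1 and x = "of_real c1"]
    by (simp add: of_nat_powr_of_real norm_mult abs_mult mult.assoc flip: of_real_minus)
  then show "polynomially_bounded (\<lambda>n. f n * of_real (- ln (real n) * real n powr (- c1)))"
    unfolding polynomially_bounded_def by blast
  show "DPhi \<Phi> f 0 = f 0 * of_real (- ln (real 0) * real 0 powr (- c1))"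
    using DPhi_in_H2[OF bdd f] by (simp add: H2_def)
  show "\<forall>\<^sub>F s in at_top. dir_series (DPhi \<Phi> f) (of_real s)
      = dir_series (\<lambda>n. f n * of_real (- ln (real n) * real n powr (- c1))) (of_real s)"
    using represents_DPhi_eventually[OF represents_DPhi_DPhi[OF bdd f]]
      eventually_gt_at_top[of "max \<sigma> (2 - c1)"]
  proof eventually_elim
    case (elim s)
    then have "dir_series (DPhi \<Phi> f) (of_real s) = deriv (dir_series f) (of_real (s + c1))"
      using \<Phi> by simp
    also have "\<dots> = (\<Sum>n. - f n * of_real (ln (real n)) * of_nat n powr (- of_real (s + c1)))"
      using elim norm_le_h2_norm[OF f] by (intro deriv_dir_series) auto
    also have "\<dots> = dir_series (\<lambda>n. f n * of_real (- ln (real n) * real n powr (- c1))) (of_real s)"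
      unfolding dir_series_def
    proof (rule suminf_cong)
      fix n
      have "(of_nat n :: complex) powr (- of_real (s + c1)) = of_real (real n powr (- c1) * real n powr (- s))"
        using of_nat_powr_of_real[of n "- (s + c1)"] by (simp add: powr_add[symmetric] algebra_simps)
      then have "(of_nat n :: complex) powr (- of_real (s + c1))
          = of_real (real n powr (- c1)) * of_nat n powr (- of_real s)"
        using of_nat_powr_of_real[of n "- s"] by simp
      then show "- f n * of_real (ln (real n)) * of_nat n powr (- of_real (s + c1))
          = f n * of_real (- ln (real n) * real n powr (- c1)) * of_nat n powr (- of_real s)"
        by (simp add: mult_ac)
    qed
    finally show ?case .
  qed
qed

lemma DPhi_selfadjoint_if_translation:
  assumes "DPhi_bounded \<Phi>" "\<forall>s. Re s > \<sigma> \<longrightarrow> \<Phi> s = s + of_real c1"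
  shows "DPhi_selfadjoint \<Phi>"
  unfolding DPhi_selfadjoint_def h2_inner_def using DPhi_translation[OF assms]
  by (simp add: mult_ac)

theorem theorem4p1:
  fixes c0 :: nat and b :: "nat \<Rightarrow> complex"
  assumes "convergent_dirichlet b"
    and "DPhi_bounded (Phi c0 b)"
  shows "DPhi_selfadjoint (Phi c0 b) \<longleftrightarrow>
         (\<exists>c1::real. \<exists>\<sigma>::real. \<forall>s. Re s > \<sigma> \<longrightarrow> Phi c0 b s = s + of_real c1)"
proof
  assume sa: "DPhi_selfadjoint (Phi c0 b)"
  with assms have "c0 = 1" by (rule DPhi_selfadjoint_imp_coeff_one)
  with assms sa show "\<exists>c1 \<sigma>. \<forall>s. Re s > \<sigma> \<longrightarrow> Phi c0 b s = s + of_real c1"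
    using DPhi_selfadjoint_imp_translation by blast
next
  assume "\<exists>c1 \<sigma>. \<forall>s. Re s > \<sigma> \<longrightarrow> Phi c0 b s = s + of_real c1"
  then show "DPhi_selfadjoint (Phi c0 b)"
    using DPhi_selfadjoint_if_translation[OF assms(2)] by blast
qed

end
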